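(* The formal system CC (Constructive Concepts) is consistent; that is, $\bot$ is not a theorem of CC.
   Context: The language of CC is the first-order language of set theory (binary relation symbols $\in$ and $=$), augmented by a unary logical operator $\Box$ (read "is provable"). Formulas are built up in the usual way from atomic formulas using $\wedge,\vee,\to,\forall,\exists$, with the additional clause that if $A$ is a formula then so is $\Box A$. The symbol $\bot$ abbreviates the sentence $(\forall x)(\forall y)(x\in y)$, and $\neg A$ abbreviates $A\to\bot$. CC consists of the axioms and deduction rules of intuitionistic predicate calculus with equality, together with: (1) $A\to\Box A$; (2) $\Box(A\wedge B)\leftrightarrow(\Box A\wedge\Box B)$; (3) $\Box(A\vee B)\leftrightarrow(\Box A\vee\Box B)$; (4) $\Box((\exists x)A)\leftrightarrow(\exists x)\Box A$; (5) $\Box((\forall x)A)\leftrightarrow(\forall x)\Box A$; (6) $\Box(A\to B)\to(\Box A\to\Box B)$; the deduction rule: from $\Box A$ infer $A$; (7) extensionality: $x=y\leftrightarrow(\forall u)(u\in x\leftrightarrow u\in y)$; (8) comprehension scheme: $(\exists x)(\forall r)(r\in x\leftrightarrow\Box A)$, where $r$ is a fixed variable, $x$ is any variable, and $A$ is any formula (of the language with $\Box$) in which $x$ does not occur free. Here $A,B$ range over all formulas of the language. *)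

theory Defs
  imports Main
begin

datatype form =
    Mem nat nat
  | Eq nat nat
  | Conj form form
  | Disj form form
  | Imp form form
  | All nat form
  | Ex nat form
  | Box form

fun fv :: "form \<Rightarrow> nat set" where
  "fv (Mem x y) = {x, y}"
| "fv (Eq x y) = {x, y}"
| "fv (Conj A B) = fv A \<union> fv B"
| "fv (Disj A B) = fv A \<union> fv B"
| "fv (Imp A B) = fv A \<union> fv B"
| "fv (All x A) = fv A - {x}"
| "fv (Ex x A) = fv A - {x}"
| "fv (Box A) = fv A"

text \<open>subst A x t: replace every free occurrence of variable x in A by variable t
  (no renaming; used only together with the side condition substitutable).\<close>

definition sv :: "nat \<Rightarrow> nat \<Rightarrow> nat \<Rightarrow> nat" where
  "sv x t z = (if z = x then t else z)"

fun subst :: "form \<Rightarrow> nat \<Rightarrow> nat \<Rightarrow> form" where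
  "subst (Mem a b) x t = Mem (sv x t a) (sv x t b)"
| "subst (Eq a b) x t = Eq (sv x t a) (sv x t b)"
| "subst (Conj A B) x t = Conj (subst A x t) (subst B x t)"
| "subst (Disj A B) x t = Disj (subst A x t) (subst B x t)"
| "subst (Imp A B) x t = Imp (subst A x t) (subst B x t)"
| "subst (All z A) x t = (if z = x then All z A else All z (subst A x t))"
| "subst (Ex z A) x t = (if z = x then Ex z A else Ex z (subst A x t))"
| "subst (Box A) x t = Box (subst A x t)"

text \<open>substitutable x t A: variable t is free for x in A (no free occurrence of x
  in A lies in the scope of a quantifier binding t).\<close>

fun substitutable :: "nat \<Rightarrow> nat \<Rightarrow> form \<Rightarrow> bool" where
  "substitutable x t (Mem a b) = True"
| "substitutable x t (Eq a b) = True"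
| "substitutable x t (Conj A B) = (substitutable x t A \<and> substitutable x t B)"
| "substitutable x t (Disj A B) = (substitutable x t A \<and> substitutable x t B)"
| "substitutable x t (Imp A B) = (substitutable x t A \<and> substitutable x t B)"
| "substitutable x t (All z A) =
     (z = x \<or> x \<notin> fv A \<or> (z \<noteq> t \<and> substitutable x t A))"
| "substitutable x t (Ex z A) =
     (z = x \<or> x \<notin> fv A \<or> (z \<noteq> t \<and> substitutable x t A))"
| "substitutable x t (Box A) = substitutable x t A"

definition Iff :: "form \<Rightarrow> form \<Rightarrow> form" where
  "Iff A B = Conj (Imp A B) (Imp B A)"

definition Bot :: form where
  "Bot = All 0 (All 1 (Mem 0 1))"

definition rvar :: nat where "rvar = 0"

inductive CC_thm :: "form \<Rightarrow> bool" where
  ax_K: "CC_thm (Imp A (Imp B A))"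
| ax_S: "CC_thm (Imp (Imp A (Imp B C)) (Imp (Imp A B) (Imp A C)))"
| ax_conjE1: "CC_thm (Imp (Conj A B) A)"
| ax_conjE2: "CC_thm (Imp (Conj A B) B)"
| ax_conjI: "CC_thm (Imp A (Imp B (Conj A B)))"
| ax_disjI1: "CC_thm (Imp A (Disj A B))"
| ax_disjI2: "CC_thm (Imp B (Disj A B))"
| ax_disjE: "CC_thm (Imp (Imp A C) (Imp (Imp B C) (Imp (Disj A B) C)))"
| ax_efq: "CC_thm (Imp Bot A)"
| ax_allE: "substitutable x t A \<Longrightarrow> CC_thm (Imp (All x A) (subst A x t))"
| ax_exI: "substitutable x t A \<Longrightarrow> CC_thm (Imp (subst A x t) (Ex x A))"
| rule_allI: "CC_thm (Imp B A) \<Longrightarrow> x \<notin> fv B \<Longrightarrow> CC_thm (Imp B (All x A))"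
| rule_exE: "CC_thm (Imp A B) \<Longrightarrow> x \<notin> fv B \<Longrightarrow> CC_thm (Imp (Ex x A) B)"
| ax_refl: "CC_thm (Eq x x)"
| ax_subst: "substitutable z x A \<Longrightarrow> substitutable z y A \<Longrightarrow>
    CC_thm (Imp (Eq x y) (Imp (subst A z x) (subst A z y)))"
| rule_mp: "CC_thm (Imp A B) \<Longrightarrow> CC_thm A \<Longrightarrow> CC_thm B"
| ax1: "CC_thm (Imp A (Box A))"
| ax2: "CC_thm (Iff (Box (Conj A B)) (Conj (Box A) (Box B)))"
| ax3: "CC_thm (Iff (Box (Disj A B)) (Disj (Box A) (Box B)))"
| ax4: "CC_thm (Iff (Box (Ex x A)) (Ex x (Box A)))"
| ax5: "CC_thm (Iff (Box (All x A)) (All x (Box A)))"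
| ax6: "CC_thm (Imp (Box (Imp A B)) (Imp (Box A) (Box B)))"
| rule_box: "CC_thm (Box A) \<Longrightarrow> CC_thm A"
| ax7: "u \<noteq> x \<Longrightarrow> u \<noteq> y \<Longrightarrow>
    CC_thm (Iff (Eq x y) (All u (Iff (Mem u x) (Mem u y))))"
| ax8: "x \<noteq> rvar \<Longrightarrow> x \<notin> fv A \<Longrightarrow>
    CC_thm (Ex x (All rvar (Iff (Mem rvar x) (Box A))))"

end

theory Submission
  imports Defs
begin

text \<open>
  CC has a step-indexed Kripke model. A formula is evaluated at a level \<open>n\<close>, the number
  of \<open>\<Box>\<close>-unfoldings still available; lower levels are later worlds, so implication and the
  universal quantifier range over all \<open>k \<le> n\<close>, and \<open>\<Box>A\<close> holds at level \<open>n + 1\<close> iff \<open>A\<close> holds at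
  level \<open>n\<close> (and trivially at level 0). Objects are the empty set and closures of a formula
  \<open>A\<close> with an environment, standing for the comprehension term \<open>{r | \<Box>A}\<close>: \<open>u\<close> belongs to
  it at level \<open>n + 1\<close> iff \<open>A\<close> holds at level \<open>n\<close> with \<open>r\<close> bound to \<open>u\<close>, and at level 0 every
  closure contains everything. Since \<open>\<Box>\<close> lowers the level, membership and truth can be
  defined together by recursion on the level. Equality is coextensionality up to the current
  level. Every theorem of CC then holds at every level, whereas \<open>\<bottom>\<close> never holds because
  nothing belongs to the empty set.
\<close>

datatype obj = Empty | Clos form "nat \<Rightarrow> obj"

definition ext_eq :: "(nat \<Rightarrow> obj \<Rightarrow> obj \<Rightarrow> bool) \<Rightarrow> nat \<Rightarrow> obj \<Rightarrow> obj \<Rightarrow> bool" where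
  "ext_eq M n a b = (\<forall>k\<le>n. \<forall>u. M k u a = M k u b)"

fun holds :: "(nat \<Rightarrow> obj \<Rightarrow> obj \<Rightarrow> bool) \<Rightarrow> nat \<Rightarrow> (nat \<Rightarrow> obj) \<Rightarrow> form \<Rightarrow> bool" where
  "holds M n e (Mem a b) = M n (e a) (e b)"
| "holds M n e (Eq a b) = ext_eq M n (e a) (e b)"
| "holds M n e (Conj A B) = (holds M n e A \<and> holds M n e B)"
| "holds M n e (Disj A B) = (holds M n e A \<or> holds M n e B)"
| "holds M n e (Imp A B) = (\<forall>k\<le>n. holds M k e A \<longrightarrow> holds M k e B)"
| "holds M n e (All x A) = (\<forall>k\<le>n. \<forall>d. holds M k (e(x:=d)) A)"
| "holds M n e (Ex x A) = (\<exists>d. holds M n (e(x:=d)) A)"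
| "holds M n e (Box A) = (n = 0 \<or> holds M (n - 1) e A)"

lemma holds_Iff: "holds M n e (Iff A B) = (\<forall>k\<le>n. holds M k e A = holds M k e B)"
  by (auto simp: Iff_def)

lemma holds_cong_levels: "(\<And>k. k \<le> n \<Longrightarrow> M k = M' k) \<Longrightarrow> holds M n e A = holds M' n e A"
proof (induction A arbitrary: n e)
  case (Box A)
  then show ?case by (cases n) auto
qed (auto simp: ext_eq_def)

lemma holds_cong_env: "(\<And>v. v \<in> fv A \<Longrightarrow> e v = e' v) \<Longrightarrow> holds M n e A = holds M n e' A"
proof (induction A arbitrary: n e e')
  case (Conj A B)
  have "holds M n e A = holds M n e' A" "holds M n e B = holds M n e' B"
    by (rule Conj.IH; use Conj.prems in auto)+
  then show ?case by simp
next
  case (Disj A B)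
  have "holds M n e A = holds M n e' A" "holds M n e B = holds M n e' B"
    by (rule Disj.IH; use Disj.prems in auto)+
  then show ?case by simp
next
  case (Imp A B)
  have "holds M k e A = holds M k e' A" "holds M k e B = holds M k e' B" for k
    by (rule Imp.IH; use Imp.prems in auto)+
  then show ?case by simp
next
  case (All x A)
  have "holds M k (e(x:=d)) A = holds M k (e'(x:=d)) A" for k d
    by (rule All.IH) (use All.prems in auto)
  then show ?case by simp
next
  case (Ex x A)
  have "holds M k (e(x:=d)) A = holds M k (e'(x:=d)) A" for k d
    by (rule Ex.IH) (use Ex.prems in auto)
  then show ?case by simp
next
  case (Box A)
  have "holds M k e A = holds M k e' A" for k
    by (rule Box.IH) (use Box.prems in auto)
  then show ?case by simp
qed simp_all

lemma holds_subst_nonfree: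
  assumes "x \<notin> fv A"
  shows "holds M n e (subst A x t) = holds M n (e(x := e t)) A"
proof -
  have "subst A x t = A"
    using assms by (induction A) (auto simp: sv_def)
  moreover have "holds M n e A = holds M n (e(x := e t)) A"
    by (rule holds_cong_env) (use assms in auto)
  ultimately show ?thesis by simp
qed

lemma holds_subst:
  "substitutable x t A \<Longrightarrow> holds M n e (subst A x t) = holds M n (e(x := e t)) A"
proof (induction A arbitrary: n e)
  case (All z A)
  show ?case
  proof (cases "x \<in> fv (All z A)")
    case False
    then show ?thesis by (rule holds_subst_nonfree)
  next
    case True
    with All.prems have "z \<noteq> x" "z \<noteq> t" and "substitutable x t A" by auto
    then have "holds M k (e(z:=d)) (subst A x t) = holds M k (e(x := e t, z := d)) A" for k d
      using All.IH[of k "e(z:=d)"] by (simp only: fun_upd_other fun_upd_twist)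
    with \<open>z \<noteq> x\<close> show ?thesis by (simp del: fun_upd_apply)
  qed
next
  case (Ex z A)
  show ?case
  proof (cases "x \<in> fv (Ex z A)")
    case False
    then show ?thesis by (rule holds_subst_nonfree)
  next
    case True
    with Ex.prems have "z \<noteq> x" "z \<noteq> t" and "substitutable x t A" by auto
    then have "holds M k (e(z:=d)) (subst A x t) = holds M k (e(x := e t, z := d)) A" for k d
      using Ex.IH[of k "e(z:=d)"] by (simp only: fun_upd_other fun_upd_twist)
    with \<open>z \<noteq> x\<close> show ?thesis by (simp del: fun_upd_apply)
  qed
qed (auto simp: sv_def)

lemma ext_eq_refl: "ext_eq M n a a"
  by (simp add: ext_eq_def)

lemma ext_eq_antimono: "ext_eq M n a b \<Longrightarrow> k \<le> n \<Longrightarrow> ext_eq M k a b"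
  by (simp add: ext_eq_def)

lemma holds_Suc_imp:
  "(\<And>i u z. i \<le> n \<Longrightarrow> M (Suc i) u z \<Longrightarrow> M i u z) \<Longrightarrow> holds M (Suc n) e A \<Longrightarrow> holds M n e A"
proof (induction A arbitrary: n e)
  case (Eq a b) then show ?case by (simp add: ext_eq_antimono)
next
  case (Conj A B) then show ?case using Conj.IH[OF Conj.prems(1)] by simp
next
  case (Disj A B) then show ?case using Disj.IH[OF Disj.prems(1)] by auto
next
  case (Imp A B) then show ?case using Imp.prems(2) by simp
next
  case (All x A) then show ?case using All.prems(2) by simp
next
  case (Ex x A) then show ?case using Ex.IH[OF Ex.prems(1)] by auto
next
  case (Box A)
  show ?case
  proof (cases n)
    case (Suc m)
    then show ?thesis using Box.IH[of m] Box.prems by simp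
  qed simp
qed simp

lemma holds_antimono:
  assumes "\<And>i u z. M (Suc i) u z \<Longrightarrow> M i u z" and "k \<le> n" and "holds M n e A"
  shows "holds M k e A"
  using assms(2,3) by (induction rule: inc_induct) (auto intro: holds_Suc_imp assms(1))

text \<open>Since equality is coextensionality, congruence of \<open>M\<close> in its left argument is exactly
  what is needed for equal objects to be interchangeable in every formula.\<close>

lemma holds_cong_ext_eq:
  assumes left_cong: "\<And>i u u' w. i \<le> N \<Longrightarrow> ext_eq M i u u' \<Longrightarrow> M i u w = M i u' w"
  shows "n \<le> N \<Longrightarrow> (\<And>v. ext_eq M n (e v) (e' v)) \<Longrightarrow> holds M n e A = holds M n e' A"
proof (induction A arbitrary: n e e')
  case (Mem a b)
  have "M n (e a) (e b) = M n (e' a) (e b)" using left_cong Mem.prems by blast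
  also have "\<dots> = M n (e' a) (e' b)" using Mem.prems(2) by (simp add: ext_eq_def)
  finally show ?case by simp
next
  case (Eq a b)
  then show ?case by (simp add: ext_eq_def)
next
  case (Conj A B)
  show ?case using Conj.IH[OF Conj.prems] by simp
next
  case (Disj A B)
  show ?case using Disj.IH[OF Disj.prems] by simp
next
  case (Imp A B)
  have "holds M k e A = holds M k e' A" if "k \<le> n" for k
    by (rule Imp.IH(1)) (use Imp.prems that in \<open>auto simp: ext_eq_def\<close>)
  moreover have "holds M k e B = holds M k e' B" if "k \<le> n" for k
    by (rule Imp.IH(2)) (use Imp.prems that in \<open>auto simp: ext_eq_def\<close>)
  ultimately show ?case by auto
next
  case (All x A)
  have "holds M k (e(x:=d)) A = holds M k (e'(x:=d)) A" if "k \<le> n" for k d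
    by (rule All.IH) (use All.prems that in \<open>auto simp: ext_eq_def\<close>)
  then show ?case by auto
next
  case (Ex x A)
  have "holds M n (e(x:=d)) A = holds M n (e'(x:=d)) A" for d
    by (rule Ex.IH) (use Ex.prems in \<open>auto simp: ext_eq_refl\<close>)
  then show ?case by auto
next
  case (Box A)
  show ?case
  proof (cases n)
    case (Suc m)
    have "holds M m e A = holds M m e' A"
      by (rule Box.IH) (use Box.prems Suc in \<open>auto simp: ext_eq_def\<close>)
    then show ?thesis using Suc by simp
  qed simp
qed

text \<open>Membership at level \<open>n + 1\<close> consults membership at all levels \<open>\<le> n\<close>, which is not a
  structural recursion; \<open>approx n\<close> tabulates the levels \<open>0, \<dots>, n\<close>.\<close>

primrec approx :: "nat \<Rightarrow> nat \<Rightarrow> obj \<Rightarrow> obj \<Rightarrow> bool" where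
  "approx 0 = (\<lambda>k u z. z \<noteq> Empty)"
| "approx (Suc n) = (approx n)(Suc n := \<lambda>u z.
     case z of Empty \<Rightarrow> False | Clos A env \<Rightarrow> holds (approx n) n (env(rvar := u)) A)"

definition mem :: "nat \<Rightarrow> obj \<Rightarrow> obj \<Rightarrow> bool" where
  "mem n = approx n n"

abbreviation sat :: "nat \<Rightarrow> (nat \<Rightarrow> obj) \<Rightarrow> form \<Rightarrow> bool" where
  "sat \<equiv> holds mem"

lemma approx_eq_mem: "k \<le> n \<Longrightarrow> approx n k = mem k"
proof (induction n)
  case 0
  then show ?case by (simp add: mem_def)
next
  case (Suc n)
  then show ?case by (cases "k = Suc n") (simp_all add: mem_def)
qed

lemma mem_0: "mem 0 u z = (z \<noteq> Empty)"
  by (simp add: mem_def)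

lemma mem_Empty: "\<not> mem n u Empty"
  by (cases n) (simp_all add: mem_def)

lemma mem_Suc_Clos: "mem (Suc n) u (Clos A env) = sat n (env(rvar := u)) A"
proof -
  have "mem (Suc n) u (Clos A env) = holds (approx n) n (env(rvar := u)) A"
    by (simp add: mem_def)
  also have "\<dots> = sat n (env(rvar := u)) A"
    by (rule holds_cong_levels) (simp add: approx_eq_mem)
  finally show ?thesis .
qed

lemma mem_Suc_imp: "mem (Suc n) u z \<Longrightarrow> mem n u z"
proof (induction n arbitrary: u z rule: less_induct)
  case (less n)
  show ?case
  proof (cases z)
    case Empty
    with less.prems show ?thesis by (simp add: mem_Empty)
  next
    case (Clos A env)
    show ?thesis
    proof (cases n)
      case 0
      with Clos show ?thesis by (simp add: mem_0)
    next
      case (Suc m)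
      have "sat (Suc m) (env(rvar := u)) A"
        using less.prems Clos Suc by (simp add: mem_Suc_Clos)
      then have "sat m (env(rvar := u)) A"
        by (rule holds_Suc_imp[rotated]) (use less.IH Suc in simp)
      with Clos Suc show ?thesis by (simp add: mem_Suc_Clos)
    qed
  qed
qed

lemma sat_antimono: "k \<le> n \<Longrightarrow> sat n e A \<Longrightarrow> sat k e A"
  by (rule holds_antimono[OF mem_Suc_imp])

lemma mem_cong_left: "ext_eq mem n u u' \<Longrightarrow> mem n u w = mem n u' w"
proof (induction n arbitrary: u u' w rule: less_induct)
  case (less n)
  show ?case
  proof (cases w)
    case Empty
    then show ?thesis by (simp add: mem_Empty)
  next
    case (Clos A env)
    show ?thesis
    proof (cases n)
      case 0
      with Clos show ?thesis by (simp add: mem_0)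
    next
      case (Suc m)
      have "sat m (env(rvar := u)) A = sat m (env(rvar := u')) A"
      proof (rule holds_cong_ext_eq[of m])
        show "\<And>i u u' w. i \<le> m \<Longrightarrow> ext_eq mem i u u' \<Longrightarrow> mem i u w = mem i u' w"
          using less.IH Suc by simp
        show "\<And>v. ext_eq mem m ((env(rvar := u)) v) ((env(rvar := u')) v)"
          using less.prems Suc by (auto simp: ext_eq_def)
      qed simp
      with Clos Suc show ?thesis by (simp add: mem_Suc_Clos)
    qed
  qed
qed

lemma sat_cong_ext_eq: "(\<And>v. ext_eq mem n (e v) (e' v)) \<Longrightarrow> sat n e A = sat n e' A"
  by (rule holds_cong_ext_eq[of n]) (simp_all add: mem_cong_left)

definition valid :: "form \<Rightarrow> bool" where
  "valid A = (\<forall>n e. sat n e A)"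

lemma not_sat_Bot: "\<not> sat n e Bot"
  unfolding Bot_def by simp (metis mem_Empty order_refl)

lemma valid_mp: "valid (Imp A B) \<Longrightarrow> valid A \<Longrightarrow> valid B"
  by (auto simp: valid_def)

lemma valid_Box_elim: "valid (Box A) \<Longrightarrow> valid A"
  unfolding valid_def by (metis diff_Suc_1 holds.simps(8) nat.distinct(1))

lemma valid_K: "valid (Imp A (Imp B A))"
  by (auto simp: valid_def intro: sat_antimono)

lemma valid_S: "valid (Imp (Imp A (Imp B C)) (Imp (Imp A B) (Imp A C)))"
  by (simp add: valid_def) (meson order_refl order_trans)

lemma valid_conjI: "valid (Imp A (Imp B (Conj A B)))"
  by (auto simp: valid_def intro: sat_antimono)

lemma valid_allE: "substitutable x t A \<Longrightarrow> valid (Imp (All x A) (subst A x t))"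
  by (auto simp: valid_def holds_subst)

lemma valid_exI: "substitutable x t A \<Longrightarrow> valid (Imp (subst A x t) (Ex x A))"
  by (auto simp: valid_def holds_subst)

lemma valid_allI:
  assumes "valid (Imp B A)" and "x \<notin> fv B"
  shows "valid (Imp B (All x A))"
proof -
  have "sat j (e(x := d)) A" if "sat k e B" "j \<le> k" for e k j d
  proof -
    have "sat j e B" using that by (rule sat_antimono[rotated])
    moreover have "sat j e B = sat j (e(x := d)) B"
      by (rule holds_cong_env) (use assms(2) in auto)
    ultimately show ?thesis using assms(1) by (auto simp: valid_def)
  qed
  then show ?thesis by (auto simp: valid_def)
qed

lemma valid_exE:
  assumes "valid (Imp A B)" and "x \<notin> fv B"
  shows "valid (Imp (Ex x A) B)"
proof -
  have "sat k e B" if "sat k (e(x := d)) A" for e k d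
  proof -
    have "sat k (e(x := d)) B" using that assms(1) by (auto simp: valid_def)
    moreover have "sat k e B = sat k (e(x := d)) B"
      by (rule holds_cong_env) (use assms(2) in auto)
    ultimately show ?thesis by simp
  qed
  then show ?thesis by (auto simp: valid_def)
qed

lemma valid_eq_subst:
  assumes "substitutable z x A" and "substitutable z y A"
  shows "valid (Imp (Eq x y) (Imp (subst A z x) (subst A z y)))"
proof -
  have "sat j e (subst A z y)" if "ext_eq mem j (e x) (e y)" "sat j e (subst A z x)" for j e
  proof -
    have "sat j (e(z := e x)) A" using that(2) holds_subst[OF assms(1)] by simp
    moreover have "sat j (e(z := e x)) A = sat j (e(z := e y)) A"
      by (rule sat_cong_ext_eq) (use that(1) in \<open>simp add: ext_eq_refl\<close>)
    ultimately show ?thesis using holds_subst[OF assms(2)] by simp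
  qed
  then show ?thesis by (auto simp: valid_def intro: ext_eq_antimono)
qed

lemma valid_Box_intro: "valid (Imp A (Box A))"
  unfolding valid_def by simp (meson diff_le_self sat_antimono)

lemma all_le_Suc_conv: "(\<forall>i\<le>Suc n. P i) = (P 0 \<and> (\<forall>i\<le>n. P (Suc i)))"
  using All_less_Suc2[of "Suc n" P] by (simp add: less_Suc_eq_le)

lemma sat_Box_All: "sat k e (Box (All x A)) = sat k e (All x (Box A))"
  by (cases k) (simp_all add: all_le_Suc_conv)

lemma valid_Box_All: "valid (Iff (Box (All x A)) (All x (Box A)))"
  by (simp add: valid_def holds_Iff sat_Box_All del: holds.simps(6,8))

lemma valid_Box_mp: "valid (Imp (Box (Imp A B)) (Imp (Box A) (Box B)))"
  by (simp add: valid_def)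

lemma valid_comprehension:
  assumes "x \<noteq> rvar" and "x \<notin> fv A"
  shows "valid (Ex x (All rvar (Iff (Mem rvar x) (Box A))))"
proof -
  have "sat j (e(x := Clos A e, rvar := r)) (Mem rvar x) = sat j (e(x := Clos A e, rvar := r)) (Box A)"
    for e j r
  proof (cases j)
    case 0
    then show ?thesis using assms(1) by (simp add: mem_0)
  next
    case (Suc m)
    have "sat m (e(x := Clos A e, rvar := r)) A = sat m (e(rvar := r)) A"
      by (rule holds_cong_env) (use assms in auto)
    with Suc show ?thesis using assms(1) by (simp add: mem_Suc_Clos)
  qed
  then show ?thesis
    unfolding valid_def using assms(1) by (auto simp: holds_Iff intro!: exI[of _ "Clos A e" for e])
qed

lemma CC_thm_valid: "CC_thm A \<Longrightarrow> valid A"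
proof (induction rule: CC_thm.induct)
  case (ax_K A B) show ?case by (rule valid_K)
next
  case (ax_S A B C) show ?case by (rule valid_S)
next
  case (ax_conjI A B) show ?case by (rule valid_conjI)
next
  case (ax_efq A) show ?case by (simp add: valid_def not_sat_Bot)
next
  case (ax_allE x t A) then show ?case by (rule valid_allE)
next
  case (ax_exI x t A) then show ?case by (rule valid_exI)
next
  case (rule_allI B A x) show ?case by (rule valid_allI[OF rule_allI.IH rule_allI.hyps(2)])
next
  case (rule_exE A B x) show ?case by (rule valid_exE[OF rule_exE.IH rule_exE.hyps(2)])
next
  case (ax_refl x) show ?case by (simp add: valid_def ext_eq_refl)
next
  case (ax_subst z x A y) then show ?case by (rule valid_eq_subst)
next
  case (rule_mp A B) show ?case by (rule valid_mp[OF rule_mp.IH])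
next
  case (ax1 A) show ?case by (rule valid_Box_intro)
next
  case (ax5 x A) show ?case by (rule valid_Box_All)
next
  case (ax6 A B) show ?case by (rule valid_Box_mp)
next
  case (rule_box A) show ?case by (rule valid_Box_elim[OF rule_box.IH])
next
  case (ax7 u x y) then show ?case by (auto simp: valid_def holds_Iff ext_eq_def)
next
  case (ax8 x A) then show ?case by (rule valid_comprehension)
qed (auto simp: valid_def holds_Iff)

theorem theorem5p1:
  shows "\<not> CC_thm Bot"
  using CC_thm_valid not_sat_Bot by (auto simp: valid_def)

end
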